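(* Let $\alpha,\beta,\gamma,\delta\in\mathbb{C}$ be parameters for which all gamma functions and hypergeometric functions below are well-defined, and for $z\ne0$ let $$f(\alpha,\beta,\gamma,\delta;z)=\sum_{\nu=0}^{\infty}\frac{z^{-\nu}\Gamma(\alpha+\gamma+\nu)}{\nu!\,\Gamma(\beta+\nu)}\,E\left(\begin{matrix}\alpha+1,&\beta+\nu\\ \delta,&\beta+1+\nu\end{matrix};z\right).$$ Then for $z\neq0$, $$E(\alpha+1;\delta;z)E(\alpha+\gamma;\beta+1;-z)=f(\alpha,\beta,\gamma,\delta;z)-\frac1z f(\alpha+1,\beta+1,\gamma-1,\delta+1;z)$$ $$=\frac{\beta-\alpha-1}{\beta}f(\alpha,\beta,\gamma,\delta;z)+\frac1\beta f(\alpha+1,\beta,\gamma-1,\delta;z)+\frac{1}{\beta z^2}f(\alpha+1,\beta+2,\gamma,\delta+1;z)$$ $$=\frac{\beta-\delta+1}{\beta}f(\alpha,\beta,\gamma,\delta;z)+\frac1\beta f(\alpha,\beta,\gamma,\delta-1;z)+\frac{1}{\beta z^2}f(\alpha+1,\beta+2,\gamma,\delta+1;z).$$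
   Context: For complex parameters $a_1,\dots,a_p$, $b_1,\dots,b_q$ with $p\le q$ and $z\in\mathbb{C}\setminus\{0\}$, the MacRobert $E$-function is $$E\left(\begin{matrix}a_1,\dots,a_p\\ b_1,\dots,b_q\end{matrix};z\right)=\frac{\prod_{j=1}^p\Gamma(a_j)}{\prod_{j=1}^q\Gamma(b_j)}\,{}_pF_q\left(\begin{matrix}a_1,\dots,a_p\\ b_1,\dots,b_q\end{matrix};-\frac1z\right),$$ where ${}_pF_q$ is the generalized hypergeometric function. In particular $E(a;b;z)=\frac{\Gamma(a)}{\Gamma(b)}\,{}_1F_1(a;b;-1/z)$. *)

theory Defs
  imports "HOL-Analysis.Analysis"
begin

definition hypergeom :: "complex list \<Rightarrow> complex list \<Rightarrow> complex \<Rightarrow> complex" where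
  "hypergeom as bs z =
     (\<Sum>n. (prod_list (map (\<lambda>a. pochhammer a n) as) / prod_list (map (\<lambda>b. pochhammer b n) bs))
            * z ^ n / fact n)"

text \<open>MacRobert E-function (case p \<le> q).\<close>
definition MacRobertE :: "complex list \<Rightarrow> complex list \<Rightarrow> complex \<Rightarrow> complex" where
  "MacRobertE as bs z =
     prod_list (map Gamma as) / prod_list (map Gamma bs) * hypergeom as bs (- 1 / z)"

definition fser :: "complex \<Rightarrow> complex \<Rightarrow> complex \<Rightarrow> complex \<Rightarrow> complex \<Rightarrow> complex" where
  "fser \<alpha> \<beta> \<gamma> \<delta> z =
     (\<Sum>\<nu>. Gamma (\<alpha> + \<gamma> + of_nat \<nu>) / (z ^ \<nu> * fact \<nu> * Gamma (\<beta> + of_nat \<nu>))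
           * MacRobertE [\<alpha> + 1, \<beta> + of_nat \<nu>] [\<delta>, \<beta> + 1 + of_nat \<nu>] z)"

end

theory Submission
  imports Defs
begin

text \<open>
  Put \<open>T(a,d,x,k) = \<Gamma>(a+k)/\<Gamma>(d+k) \<cdot> x\<^sup>k/k!\<close>, so that \<open>E(a;d;z) = \<Sum>\<^sub>k T(a,d,-1/z,k)\<close> and
  \<open>E(a,b;d,b+1;z) = \<Sum>\<^sub>k T(a,d,-1/z,k)/(b+k)\<close>. Expanding \<open>E(\<alpha>+\<gamma>;\<beta>+1;-z)\<close> turns the left-hand
  side into \<open>\<Sum>\<^sub>\<nu> c\<^sub>\<nu> E(\<alpha>+1;\<delta>;z)\<close> with \<open>c\<^sub>\<nu> = T(\<alpha>+\<gamma>,\<beta>+1,1/z,\<nu>)\<close>, while the \<open>\<nu>\<close>-th summand of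
  each \<open>f\<close>-series is \<open>c\<^sub>\<nu>\<close>, times a factor at most linear in \<open>\<nu>\<close>, times an E-function whose
  second numerator parameter is \<open>\<beta>+\<nu>\<close> or \<open>\<beta>+\<nu>+1\<close> (for \<open>f(\<alpha>+1,\<beta>+2,\<gamma>,\<delta>+1;z)\<close> only after the
  shift \<open>\<nu> \<mapsto> \<nu>+1\<close>). Hence the three identities hold summand by summand, by the contiguous
  relations
    \<open>b E(a,b;d,b+1) - z\<^sup>-\<^sup>1 E(a+1,b+1;d+1,b+2) = E(a;d)\<close>,
    \<open>E(a+1,b;d,b+1) = a E(a,b;d,b+1) - z\<^sup>-\<^sup>1 E(a+1,b+1;d+1,b+2)\<close>,
    \<open>E(a,b;d-1,b+1) = (d-1) E(a,b;d,b+1) - z\<^sup>-\<^sup>1 E(a+1,b+1;d+1,b+2)\<close>,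
  which follow from \<open>(a+k) T(a,d) = T(a+1,d)\<close>, \<open>(d-1+k) T(a,d) = T(a,d-1)\<close> and the index shift
  \<open>\<Sum>\<^sub>k k T(a,d,-1/z,k)/(b+k) = -z\<^sup>-\<^sup>1 E(a+1,b+1;d+1,b+2;z)\<close>.
\<close>

lemma plus_of_nat_notin_nonpos_Ints:
  fixes z :: "'a :: ring_char_0"
  assumes "z \<notin> \<int>\<^sub>\<le>\<^sub>0"
  shows "z + of_nat n \<notin> \<int>\<^sub>\<le>\<^sub>0"
  using nonpos_Ints_diff_Nats[of "z + of_nat n" "of_nat n"] assms by auto

lemma plus_one_notin_nonpos_Ints:
  fixes z :: "'a :: ring_char_0"
  shows "z \<notin> \<int>\<^sub>\<le>\<^sub>0 \<Longrightarrow> z + 1 \<notin> \<int>\<^sub>\<le>\<^sub>0"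
  using plus_of_nat_notin_nonpos_Ints[of z 1] by simp

lemma filterlim_add_of_nat_at_infinity:
  fixes b :: "'a :: real_normed_field"
  shows "filterlim (\<lambda>n. b + of_nat n) at_infinity sequentially"
  by (rule tendsto_add_filterlim_at_infinity[OF tendsto_const tendsto_of_nat])

lemma tendsto_add_of_nat_ratio:
  fixes a d :: "'a :: real_normed_field"
  shows "(\<lambda>k. (a + of_nat k) / (d + of_nat k)) \<longlonglongrightarrow> 1"
proof -
  have "(\<lambda>k. 1 + (a - d) * inverse (d + of_nat k)) \<longlonglongrightarrow> 1 + (a - d) * 0"
    by (intro tendsto_intros filterlim_compose[OF tendsto_inverse_0 filterlim_add_of_nat_at_infinity])
  moreover have "\<forall>\<^sub>F k in sequentially. 1 + (a - d) * inverse (d + of_nat k) = (a + of_nat k) / (d + of_nat k)"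
    using filterlim_at_infinity_imp_eventually_ne[OF filterlim_add_of_nat_at_infinity[of d], of 0]
    by eventually_elim (simp add: field_simps)
  ultimately show ?thesis by (simp add: tendsto_cong)
qed

lemma bounded_inverse_add_of_nat:
  fixes b :: "'a :: real_normed_field"
  obtains C where "\<And>n. norm (inverse (b + of_nat n)) \<le> C"
proof -
  have "(\<lambda>n. inverse (b + of_nat n)) \<longlonglongrightarrow> 0"
    by (rule filterlim_compose[OF tendsto_inverse_0 filterlim_add_of_nat_at_infinity])
  hence "Bseq (\<lambda>n. inverse (b + of_nat n))"
    by (intro convergent_imp_Bseq convergentI)
  thus ?thesis using that by (auto simp: Bseq_def)
qed

lemma norm_divide_le_of_norm_inverse_le:
  fixes x y :: "'a :: real_normed_field"
  assumes "norm (inverse y) \<le> C"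
  shows "norm (x / y) \<le> C * norm x"
  using mult_right_mono[OF assms norm_ge_zero[of x]]
  by (simp add: divide_inverse norm_mult mult.commute)

lemma summable_norm_ratio_tendsto_0:
  fixes f :: "nat \<Rightarrow> 'a :: real_normed_vector"
  assumes "r \<longlonglongrightarrow> 0" and "\<And>n. norm (f (Suc n)) \<le> r n * norm (f n)"
  shows "summable (\<lambda>n. norm (f n))"
proof -
  obtain N where N: "\<And>n. n \<ge> N \<Longrightarrow> r n < 1/2"
    using order_tendstoD(2)[OF assms(1), of "1/2"] by (auto simp: eventually_sequentially)
  show ?thesis
  proof (rule summable_ratio_test[of "1/2" N])
    fix n assume "n \<ge> N"
    hence "r n * norm (f n) \<le> 1/2 * norm (f n)"
      using N[of n] by (intro mult_right_mono) auto
    thus "norm (norm (f (Suc n))) \<le> 1/2 * norm (norm (f n))"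
      using assms(2)[of n] by simp
  qed simp
qed

definition MacRobert_term :: "complex \<Rightarrow> complex \<Rightarrow> complex \<Rightarrow> nat \<Rightarrow> complex" where
  "MacRobert_term a d x k = Gamma (a + of_nat k) * rGamma (d + of_nat k) * x ^ k / fact k"

lemma MacRobert_term_plus1_left:
  assumes "a \<notin> \<int>\<^sub>\<le>\<^sub>0"
  shows "MacRobert_term (a + 1) d x k = (a + of_nat k) * MacRobert_term a d x k"
  using Gamma_plus1[OF plus_of_nat_notin_nonpos_Ints[OF assms, of k]]
  by (simp add: MacRobert_term_def add_ac)

lemma MacRobert_term_plus1_right:
  "MacRobert_term a d x k = (d + of_nat k) * MacRobert_term a (d + 1) x k"
  using rGamma_plus1[of "d + of_nat k"] by (simp add: MacRobert_term_def add_ac)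

lemma MacRobert_term_Suc_shift:
  "of_nat (Suc k) * MacRobert_term a d x (Suc k) = x * MacRobert_term (a + 1) (d + 1) x k"
proof -
  have shift: "a + of_nat (Suc k) = a + 1 + of_nat k" "d + of_nat (Suc k) = d + 1 + of_nat k"
    by simp_all
  have "of_nat (Suc k) * (G * R * x ^ Suc k / fact (Suc k)) = x * (G * R * x ^ k / fact k)"
    for G R :: complex
    by (simp add: fact_Suc field_simps del: of_nat_Suc)
  thus ?thesis
    unfolding MacRobert_term_def shift .
qed

lemma MacRobert_term_Suc:
  assumes "a \<notin> \<int>\<^sub>\<le>\<^sub>0" and "d \<notin> \<int>\<^sub>\<le>\<^sub>0"
  shows "MacRobert_term a d x (Suc k)
           = (a + of_nat k) / (d + of_nat k) * (x / of_nat (Suc k)) * MacRobert_term a d x k"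
proof -
  have "d + of_nat k \<noteq> 0"
    using assms(2) plus_of_nat_eq_0_imp by blast
  have "MacRobert_term a d x (Suc k) = x / of_nat (Suc k) * MacRobert_term (a + 1) (d + 1) x k"
    using MacRobert_term_Suc_shift[of k a d x] by (simp add: field_simps del: of_nat_Suc)
  also have "\<dots> = x / of_nat (Suc k) * (a + of_nat k) * MacRobert_term a (d + 1) x k"
    by (simp add: MacRobert_term_plus1_left[OF assms(1)])
  also have "MacRobert_term a (d + 1) x k = MacRobert_term a d x k / (d + of_nat k)"
    using MacRobert_term_plus1_right[of a d x k] \<open>d + of_nat k \<noteq> 0\<close> by simp
  finally show ?thesis
    by (simp add: field_simps)
qed

lemma summable_norm_MacRobert_term:
  assumes "a \<notin> \<int>\<^sub>\<le>\<^sub>0" and "d \<notin> \<int>\<^sub>\<le>\<^sub>0"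
  shows "summable (\<lambda>k. norm (MacRobert_term a d x k))"
proof (rule summable_norm_ratio_tendsto_0)
  have "(\<lambda>k. norm ((a + of_nat k) / (d + of_nat k) * (x / of_nat (Suc k)))) \<longlonglongrightarrow> norm (1 * (0::complex))"
    by (intro tendsto_intros tendsto_add_of_nat_ratio LIMSEQ_Suc[OF lim_const_over_n])
  thus "(\<lambda>k. norm ((a + of_nat k) / (d + of_nat k) * (x / of_nat (Suc k)))) \<longlonglongrightarrow> 0"
    by simp
qed (simp only: MacRobert_term_Suc[OF assms] norm_mult order_refl)

lemma summable_MacRobert_term:
  assumes "a \<notin> \<int>\<^sub>\<le>\<^sub>0" and "d \<notin> \<int>\<^sub>\<le>\<^sub>0"
  shows "summable (MacRobert_term a d x)"
  by (rule summable_norm_cancel[OF summable_norm_MacRobert_term[OF assms]])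

lemma Gamma_pochhammer_quotient:
  fixes a d :: complex
  assumes "a \<notin> \<int>\<^sub>\<le>\<^sub>0" and "d \<notin> \<int>\<^sub>\<le>\<^sub>0"
  shows "Gamma a * pochhammer a n / (Gamma d * pochhammer d n)
           = Gamma (a + of_nat n) * rGamma (d + of_nat n)"
  using assms by (simp add: pochhammer_Gamma Gamma_eq_zero_iff rGamma_inverse_Gamma field_simps)

lemma MacRobertE_sums:
  assumes "a \<notin> \<int>\<^sub>\<le>\<^sub>0" and "d \<notin> \<int>\<^sub>\<le>\<^sub>0"
  shows "MacRobert_term a d (-1/z) sums MacRobertE [a] [d] z"
proof -
  define K where "K = Gamma a / Gamma d"
  define u where "u n = pochhammer a n / pochhammer d n * (-1/z) ^ n / fact n" for n
  have "K \<noteq> 0"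
    using assms by (simp add: K_def Gamma_eq_zero_iff)
  have term_eq: "MacRobert_term a d (-1/z) = (\<lambda>n. K * u n)"
    by (simp add: fun_eq_iff MacRobert_term_def K_def u_def mult_ac
                  flip: Gamma_pochhammer_quotient[OF assms])
  hence "summable u"
    using summable_MacRobert_term[OF assms] \<open>K \<noteq> 0\<close> summable_cmult_iff by metis
  moreover have "MacRobertE [a] [d] z = K * suminf u"
    unfolding MacRobertE_def hypergeom_def K_def u_def by simp
  ultimately show ?thesis
    unfolding term_eq by (simp add: sums_mult summable_sums)
qed

lemma MacRobertE_uminus_sums:
  assumes "a \<notin> \<int>\<^sub>\<le>\<^sub>0" and "d \<notin> \<int>\<^sub>\<le>\<^sub>0"
  shows "MacRobert_term a d (1/z) sums MacRobertE [a] [d] (-z)"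
  using MacRobertE_sums[OF assms, of "-z"] by simp

lemma Gamma_pochhammer_quotient_plus1:
  fixes b :: complex
  assumes "b \<notin> \<int>\<^sub>\<le>\<^sub>0"
  shows "Gamma b * pochhammer b n / (Gamma (b + 1) * pochhammer (b + 1) n) = inverse (b + of_nat n)"
proof -
  have "Gamma (b + of_nat n) * rGamma (b + of_nat n) = 1"
    using plus_of_nat_notin_nonpos_Ints[OF assms]
    by (simp add: Gamma_eq_zero_iff rGamma_inverse_Gamma)
  moreover have "rGamma (b + of_nat n) = (b + of_nat n) * rGamma (b + 1 + of_nat n)"
    using rGamma_plus1[of "b + of_nat n"] by (simp add: add_ac)
  ultimately have "Gamma (b + of_nat n) * rGamma (b + 1 + of_nat n) = inverse (b + of_nat n)"
    by (metis inverse_unique mult.left_commute)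
  thus ?thesis
    using Gamma_pochhammer_quotient[OF assms plus_one_notin_nonpos_Ints[OF assms], of n] by simp
qed

lemma summable_norm_MacRobert_term_div:
  assumes "a \<notin> \<int>\<^sub>\<le>\<^sub>0" and "d \<notin> \<int>\<^sub>\<le>\<^sub>0" and C: "\<And>k. norm (inverse (b + of_nat k)) \<le> C"
  shows "summable (\<lambda>k. norm (MacRobert_term a d x k / (b + of_nat k)))"
proof (rule summable_comparison_test')
  show "summable (\<lambda>k. C * norm (MacRobert_term a d x k))"
    by (intro summable_mult summable_norm_MacRobert_term assms)
  show "norm (norm (MacRobert_term a d x k / (b + of_nat k))) \<le> C * norm (MacRobert_term a d x k)" for k
    using norm_divide_le_of_norm_inverse_le[OF C] by simp
qed

lemma summable_MacRobert_term_div: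
  assumes "a \<notin> \<int>\<^sub>\<le>\<^sub>0" and "d \<notin> \<int>\<^sub>\<le>\<^sub>0"
  shows "summable (\<lambda>k. MacRobert_term a d x k / (b + of_nat k))"
proof -
  obtain C where "\<And>k. norm (inverse (b + of_nat k)) \<le> C"
    using bounded_inverse_add_of_nat[of b] by blast
  thus ?thesis
    by (rule summable_norm_cancel[OF summable_norm_MacRobert_term_div[OF assms]])
qed

lemma MacRobertE_pair_sums:
  assumes "a \<notin> \<int>\<^sub>\<le>\<^sub>0" and "d \<notin> \<int>\<^sub>\<le>\<^sub>0" and "b \<notin> \<int>\<^sub>\<le>\<^sub>0"
  shows "(\<lambda>k. MacRobert_term a d (-1/z) k / (b + of_nat k)) sums MacRobertE [a, b] [d, b + 1] z"
proof -
  define K where "K = Gamma a * Gamma b / (Gamma d * Gamma (b + 1))"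
  define u where "u n = pochhammer a n * pochhammer b n / (pochhammer d n * pochhammer (b + 1) n)
                          * (-1/z) ^ n / fact n" for n
  have "K \<noteq> 0"
    using assms plus_one_notin_nonpos_Ints[OF assms(3)] by (simp add: K_def Gamma_eq_zero_iff)
  have term_eq: "MacRobert_term a d (-1/z) n / (b + of_nat n) = K * u n" for n
  proof -
    have "MacRobert_term a d (-1/z) n / (b + of_nat n)
            = (Gamma a * pochhammer a n / (Gamma d * pochhammer d n))
              * (Gamma b * pochhammer b n / (Gamma (b + 1) * pochhammer (b + 1) n))
              * (-1/z) ^ n / fact n"
      unfolding MacRobert_term_def Gamma_pochhammer_quotient[OF assms(1,2)]
        Gamma_pochhammer_quotient_plus1[OF assms(3)] by (simp add: divide_inverse)
    also have "\<dots> = K * u n"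
      unfolding K_def u_def times_divide_times_eq by (simp add: ac_simps)
    finally show ?thesis .
  qed
  have "summable (\<lambda>n. K * u n)"
    using summable_MacRobert_term_div[OF assms(1,2), of "-1/z" b] unfolding term_eq .
  hence "summable u"
    using \<open>K \<noteq> 0\<close> summable_cmult_iff by blast
  moreover have "MacRobertE [a, b] [d, b + 1] z = K * suminf u"
    unfolding MacRobertE_def hypergeom_def K_def u_def by simp
  ultimately show ?thesis
    by (simp only: term_eq sums_mult summable_sums)
qed

lemma norm_MacRobertE_pair_le:
  assumes "a \<notin> \<int>\<^sub>\<le>\<^sub>0" and "d \<notin> \<int>\<^sub>\<le>\<^sub>0" and "b \<notin> \<int>\<^sub>\<le>\<^sub>0"
    and C: "\<And>k. norm (inverse (b + of_nat k)) \<le> C"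
  shows "norm (MacRobertE [a, b] [d, b + 1] z) \<le> C * (\<Sum>k. norm (MacRobert_term a d (-1/z) k))"
proof -
  let ?t = "MacRobert_term a d (-1/z)"
  have "norm (MacRobertE [a, b] [d, b + 1] z) = norm (\<Sum>k. ?t k / (b + of_nat k))"
    using MacRobertE_pair_sums[OF assms(1-3)] by (simp add: sums_iff)
  also have "\<dots> \<le> (\<Sum>k. norm (?t k / (b + of_nat k)))"
    by (rule summable_norm[OF summable_norm_MacRobert_term_div[OF assms(1,2) C]])
  also have "\<dots> \<le> (\<Sum>k. C * norm (?t k))"
    by (intro suminf_le norm_divide_le_of_norm_inverse_le C summable_norm_MacRobert_term_div[OF assms(1,2) C]
          summable_mult summable_norm_MacRobert_term assms(1,2))
  also have "\<dots> = C * (\<Sum>k. norm (?t k))"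
    by (intro suminf_mult summable_norm_MacRobert_term assms(1,2))
  finally show ?thesis .
qed

lemma MacRobertE_pair_weighted_sums:
  assumes "a \<notin> \<int>\<^sub>\<le>\<^sub>0" and "d \<notin> \<int>\<^sub>\<le>\<^sub>0" and "b \<notin> \<int>\<^sub>\<le>\<^sub>0"
  shows "(\<lambda>k. of_nat k * MacRobert_term a d (-1/z) k / (b + of_nat k))
           sums (-1/z * MacRobertE [a + 1, b + 1] [d + 1, b + 2] z)"
proof -
  have "(\<lambda>k. MacRobert_term (a + 1) (d + 1) (-1/z) k / (b + 1 + of_nat k))
          sums MacRobertE [a + 1, b + 1] [d + 1, b + 1 + 1] z"
    by (intro MacRobertE_pair_sums plus_one_notin_nonpos_Ints assms)
  hence "(\<lambda>k. -1/z * (MacRobert_term (a + 1) (d + 1) (-1/z) k / (b + 1 + of_nat k)))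
          sums (-1/z * MacRobertE [a + 1, b + 1] [d + 1, b + 2] z)"
    by (intro sums_mult) (simp add: add.assoc)
  moreover have "of_nat (Suc k) * MacRobert_term a d (-1/z) (Suc k) / (b + of_nat (Suc k))
                   = -1/z * (MacRobert_term (a + 1) (d + 1) (-1/z) k / (b + 1 + of_nat k))" for k
    using MacRobert_term_Suc_shift[of k a d "-1/z"] by (simp add: add_ac)
  ultimately have "(\<lambda>k. of_nat (Suc k) * MacRobert_term a d (-1/z) (Suc k) / (b + of_nat (Suc k)))
                     sums (-1/z * MacRobertE [a + 1, b + 1] [d + 1, b + 2] z)"
    by (simp only:)
  thus ?thesis
    by (subst (asm) sums_Suc_iff) simp
qed

lemma MacRobertE_contiguous_b:
  assumes "a \<notin> \<int>\<^sub>\<le>\<^sub>0" and "d \<notin> \<int>\<^sub>\<le>\<^sub>0" and "b \<notin> \<int>\<^sub>\<le>\<^sub>0"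
  shows "b * MacRobertE [a, b] [d, b + 1] z - 1/z * MacRobertE [a + 1, b + 1] [d + 1, b + 2] z
           = MacRobertE [a] [d] z"
proof -
  let ?t = "MacRobert_term a d (-1/z)"
  have "(\<lambda>k. b * (?t k / (b + of_nat k)) + of_nat k * ?t k / (b + of_nat k))
          sums (b * MacRobertE [a, b] [d, b + 1] z + -1/z * MacRobertE [a + 1, b + 1] [d + 1, b + 2] z)"
    by (intro sums_add sums_mult MacRobertE_pair_sums MacRobertE_pair_weighted_sums assms)
  moreover have "b * (?t k / (b + of_nat k)) + of_nat k * ?t k / (b + of_nat k) = ?t k" for k
  proof -
    have "b * (?t k / (b + of_nat k)) + of_nat k * ?t k / (b + of_nat k)
            = (b + of_nat k) * ?t k / (b + of_nat k)"
      by (simp add: divide_inverse algebra_simps)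
    also have "\<dots> = ?t k"
      using plus_of_nat_eq_0_imp assms(3) by fastforce
    finally show ?thesis .
  qed
  ultimately have "?t sums (b * MacRobertE [a, b] [d, b + 1] z - 1/z * MacRobertE [a + 1, b + 1] [d + 1, b + 2] z)"
    by simp
  thus ?thesis
    using MacRobertE_sums[OF assms(1,2)] sums_unique2 by blast
qed

lemma MacRobertE_contiguous_a:
  assumes "a \<notin> \<int>\<^sub>\<le>\<^sub>0" and "d \<notin> \<int>\<^sub>\<le>\<^sub>0" and "b \<notin> \<int>\<^sub>\<le>\<^sub>0"
  shows "MacRobertE [a + 1, b] [d, b + 1] z
           = a * MacRobertE [a, b] [d, b + 1] z - 1/z * MacRobertE [a + 1, b + 1] [d + 1, b + 2] z"
proof -
  let ?t = "MacRobert_term a d (-1/z)"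
  have "(\<lambda>k. a * (?t k / (b + of_nat k)) + of_nat k * ?t k / (b + of_nat k))
          sums (a * MacRobertE [a, b] [d, b + 1] z + -1/z * MacRobertE [a + 1, b + 1] [d + 1, b + 2] z)"
    by (intro sums_add sums_mult MacRobertE_pair_sums MacRobertE_pair_weighted_sums assms)
  moreover have "a * (?t k / (b + of_nat k)) + of_nat k * ?t k / (b + of_nat k)
                   = MacRobert_term (a + 1) d (-1/z) k / (b + of_nat k)" for k
    unfolding MacRobert_term_plus1_left[OF assms(1)] by (simp add: divide_inverse algebra_simps)
  ultimately have "(\<lambda>k. MacRobert_term (a + 1) d (-1/z) k / (b + of_nat k))
                     sums (a * MacRobertE [a, b] [d, b + 1] z - 1/z * MacRobertE [a + 1, b + 1] [d + 1, b + 2] z)"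
    by simp
  thus ?thesis
    using MacRobertE_pair_sums[OF plus_one_notin_nonpos_Ints[OF assms(1)] assms(2,3)] sums_unique2 by blast
qed

lemma MacRobertE_contiguous_d:
  assumes "a \<notin> \<int>\<^sub>\<le>\<^sub>0" and "d - 1 \<notin> \<int>\<^sub>\<le>\<^sub>0" and "b \<notin> \<int>\<^sub>\<le>\<^sub>0"
  shows "MacRobertE [a, b] [d - 1, b + 1] z
           = (d - 1) * MacRobertE [a, b] [d, b + 1] z - 1/z * MacRobertE [a + 1, b + 1] [d + 1, b + 2] z"
proof -
  have d: "d \<notin> \<int>\<^sub>\<le>\<^sub>0"
    using plus_one_notin_nonpos_Ints[OF assms(2)] by simp
  let ?t = "MacRobert_term a d (-1/z)"
  have "(\<lambda>k. (d - 1) * (?t k / (b + of_nat k)) + of_nat k * ?t k / (b + of_nat k))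
          sums ((d - 1) * MacRobertE [a, b] [d, b + 1] z + -1/z * MacRobertE [a + 1, b + 1] [d + 1, b + 2] z)"
    by (intro sums_add sums_mult MacRobertE_pair_sums MacRobertE_pair_weighted_sums assms d)
  moreover have "(d - 1) * (?t k / (b + of_nat k)) + of_nat k * ?t k / (b + of_nat k)
                   = MacRobert_term a (d - 1) (-1/z) k / (b + of_nat k)" for k
    unfolding MacRobert_term_plus1_right[of a "d - 1" "-1/z" k] by (simp add: divide_inverse algebra_simps)
  ultimately have "(\<lambda>k. MacRobert_term a (d - 1) (-1/z) k / (b + of_nat k))
                     sums ((d - 1) * MacRobertE [a, b] [d, b + 1] z - 1/z * MacRobertE [a + 1, b + 1] [d + 1, b + 2] z)"
    by simp
  thus ?thesis
    using MacRobertE_pair_sums[OF assms] sums_unique2 by blast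
qed

definition fser_term :: "complex \<Rightarrow> complex \<Rightarrow> complex \<Rightarrow> complex \<Rightarrow> complex \<Rightarrow> nat \<Rightarrow> complex" where
  "fser_term \<alpha> \<beta> \<gamma> \<delta> z \<nu> =
     Gamma (\<alpha> + \<gamma> + of_nat \<nu>) / (z ^ \<nu> * fact \<nu> * Gamma (\<beta> + of_nat \<nu>))
       * MacRobertE [\<alpha> + 1, \<beta> + of_nat \<nu>] [\<delta>, \<beta> + 1 + of_nat \<nu>] z"

lemma fser_term_eq:
  "fser_term \<alpha> \<beta> \<gamma> \<delta> z \<nu>
     = MacRobert_term (\<alpha> + \<gamma>) \<beta> (1/z) \<nu> * MacRobertE [\<alpha> + 1, \<beta> + of_nat \<nu>] [\<delta>, \<beta> + 1 + of_nat \<nu>] z"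
  unfolding fser_term_def MacRobert_term_def rGamma_inverse_Gamma by (simp add: field_simps power_divide)

lemma summable_fser_term:
  assumes "\<alpha> + 1 \<notin> \<int>\<^sub>\<le>\<^sub>0" and "\<beta> \<notin> \<int>\<^sub>\<le>\<^sub>0" and "\<delta> \<notin> \<int>\<^sub>\<le>\<^sub>0" and "\<alpha> + \<gamma> \<notin> \<int>\<^sub>\<le>\<^sub>0"
  shows "summable (fser_term \<alpha> \<beta> \<gamma> \<delta> z)"
proof -
  obtain C where C: "\<And>n. norm (inverse (\<beta> + of_nat n)) \<le> C"
    using bounded_inverse_add_of_nat[of \<beta>] by blast
  define M where "M = C * (\<Sum>k. norm (MacRobert_term (\<alpha> + 1) \<delta> (-1/z) k))"
  have "norm (MacRobertE [\<alpha> + 1, \<beta> + of_nat \<nu>] [\<delta>, \<beta> + of_nat \<nu> + 1] z) \<le> M" for \<nu>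
    unfolding M_def
  proof (rule norm_MacRobertE_pair_le[OF assms(1,3) plus_of_nat_notin_nonpos_Ints[OF assms(2)]])
    show "norm (inverse (\<beta> + of_nat \<nu> + of_nat k)) \<le> C" for k
      using C[of "\<nu> + k"] by (simp add: add_ac)
  qed
  hence "norm (MacRobertE [\<alpha> + 1, \<beta> + of_nat \<nu>] [\<delta>, \<beta> + 1 + of_nat \<nu>] z) \<le> M" for \<nu>
    by (simp add: add_ac)
  hence bound: "norm (fser_term \<alpha> \<beta> \<gamma> \<delta> z \<nu>) \<le> M * norm (MacRobert_term (\<alpha> + \<gamma>) \<beta> (1/z) \<nu>)" for \<nu>
    unfolding fser_term_eq norm_mult
    by (metis mult.commute mult_left_mono norm_ge_zero)
  have "summable (\<lambda>\<nu>. M * norm (MacRobert_term (\<alpha> + \<gamma>) \<beta> (1/z) \<nu>))"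
    by (intro summable_mult summable_norm_MacRobert_term assms(2,4))
  thus ?thesis
    by (rule summable_comparison_test') (rule bound)
qed

lemma fser_sums:
  assumes "\<alpha> + 1 \<notin> \<int>\<^sub>\<le>\<^sub>0" and "\<beta> \<notin> \<int>\<^sub>\<le>\<^sub>0" and "\<delta> \<notin> \<int>\<^sub>\<le>\<^sub>0" and "\<alpha> + \<gamma> \<notin> \<int>\<^sub>\<le>\<^sub>0"
  shows "fser_term \<alpha> \<beta> \<gamma> \<delta> z sums fser \<alpha> \<beta> \<gamma> \<delta> z"
  using summable_fser_term[OF assms] unfolding fser_def fser_term_def by (rule summable_sums)

lemma fser_succ_beta_gamma_sums:
  assumes "z \<noteq> 0"
    and "\<alpha> + 1 \<notin> \<int>\<^sub>\<le>\<^sub>0" and "\<beta> + 1 \<notin> \<int>\<^sub>\<le>\<^sub>0" and "\<delta> \<notin> \<int>\<^sub>\<le>\<^sub>0" and "\<alpha> + \<gamma> + 1 \<notin> \<int>\<^sub>\<le>\<^sub>0"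
  shows "(\<lambda>\<nu>. of_nat \<nu> * z * fser_term \<alpha> \<beta> \<gamma> \<delta> z \<nu>) sums fser \<alpha> (\<beta> + 1) (\<gamma> + 1) \<delta> z"
proof -
  have "of_nat (Suc \<nu>) * z * fser_term \<alpha> \<beta> \<gamma> \<delta> z (Suc \<nu>) = fser_term \<alpha> (\<beta> + 1) (\<gamma> + 1) \<delta> z \<nu>" for \<nu>
  proof -
    have "of_nat (Suc \<nu>) * z * MacRobert_term (\<alpha> + \<gamma>) \<beta> (1/z) (Suc \<nu>)
            = MacRobert_term (\<alpha> + \<gamma> + 1) (\<beta> + 1) (1/z) \<nu>"
      using MacRobert_term_Suc_shift[of \<nu> "\<alpha> + \<gamma>" \<beta> "1/z"] assms(1)
      by (simp add: field_simps)
    thus ?thesis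
      by (simp add: fser_term_eq add_ac mult.assoc)
  qed
  moreover have "fser_term \<alpha> (\<beta> + 1) (\<gamma> + 1) \<delta> z sums fser \<alpha> (\<beta> + 1) (\<gamma> + 1) \<delta> z"
    using fser_sums[OF assms(2-4)] assms(5) by (simp add: add_ac)
  ultimately have "(\<lambda>\<nu>. of_nat (Suc \<nu>) * z * fser_term \<alpha> \<beta> \<gamma> \<delta> z (Suc \<nu>)) sums fser \<alpha> (\<beta> + 1) (\<gamma> + 1) \<delta> z"
    by (simp only:)
  thus ?thesis
    by (subst (asm) sums_Suc_iff) simp
qed

lemma fser_term_factored:
  fixes \<alpha> \<beta> \<gamma> \<delta> z :: complex and \<nu> :: nat
  defines "c \<equiv> MacRobert_term (\<alpha> + \<gamma>) (\<beta> + 1) (1/z) \<nu>" and "B \<equiv> \<beta> + of_nat \<nu>"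
  shows "fser_term \<alpha> \<beta> \<gamma> \<delta> z \<nu> = B * c * MacRobertE [\<alpha> + 1, B] [\<delta>, B + 1] z"
    and "fser_term (\<alpha> + 1) \<beta> (\<gamma> - 1) \<delta> z \<nu> = B * c * MacRobertE [\<alpha> + 1 + 1, B] [\<delta>, B + 1] z"
    and "fser_term \<alpha> \<beta> \<gamma> (\<delta> - 1) z \<nu> = B * c * MacRobertE [\<alpha> + 1, B] [\<delta> - 1, B + 1] z"
    and "fser_term (\<alpha> + 1) (\<beta> + 1) (\<gamma> - 1) (\<delta> + 1) z \<nu>
           = c * MacRobertE [\<alpha> + 1 + 1, B + 1] [\<delta> + 1, B + 2] z"
  unfolding c_def B_def
  by (simp_all add: fser_term_eq MacRobert_term_plus1_right[of _ \<beta>] add_ac)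

lemma MacRobertE_product_eq_fser_diff:
  fixes \<alpha> \<beta> \<gamma> \<delta> z :: complex
  assumes "\<alpha> + 1 \<notin> \<int>\<^sub>\<le>\<^sub>0" and "\<beta> \<notin> \<int>\<^sub>\<le>\<^sub>0" and "\<delta> \<notin> \<int>\<^sub>\<le>\<^sub>0" and "\<alpha> + \<gamma> \<notin> \<int>\<^sub>\<le>\<^sub>0"
  shows "MacRobertE [\<alpha> + 1] [\<delta>] z * MacRobertE [\<alpha> + \<gamma>] [\<beta> + 1] (- z)
           = fser \<alpha> \<beta> \<gamma> \<delta> z - 1/z * fser (\<alpha> + 1) (\<beta> + 1) (\<gamma> - 1) (\<delta> + 1) z"
proof -
  let ?E = "MacRobertE [\<alpha> + 1] [\<delta>] z" and ?c = "MacRobert_term (\<alpha> + \<gamma>) (\<beta> + 1) (1/z)"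
  have termwise: "fser_term \<alpha> \<beta> \<gamma> \<delta> z \<nu> - 1/z * fser_term (\<alpha> + 1) (\<beta> + 1) (\<gamma> - 1) (\<delta> + 1) z \<nu>
                    = ?E * ?c \<nu>" for \<nu>
  proof -
    have B: "\<beta> + of_nat \<nu> \<notin> \<int>\<^sub>\<le>\<^sub>0"
      by (rule plus_of_nat_notin_nonpos_Ints[OF assms(2)])
    show ?thesis
      unfolding fser_term_factored(4) unfolding fser_term_factored(1)
      unfolding MacRobertE_contiguous_b[OF assms(1,3) B, symmetric] by (simp add: algebra_simps)
  qed
  have succ_sums: "fser_term (\<alpha> + 1) (\<beta> + 1) (\<gamma> - 1) (\<delta> + 1) z sums fser (\<alpha> + 1) (\<beta> + 1) (\<gamma> - 1) (\<delta> + 1) z"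
    using fser_sums[OF plus_one_notin_nonpos_Ints[OF assms(1)] plus_one_notin_nonpos_Ints[OF assms(2)]
                       plus_one_notin_nonpos_Ints[OF assms(3)]] assms(4) by simp
  have "(\<lambda>\<nu>. fser_term \<alpha> \<beta> \<gamma> \<delta> z \<nu> - 1/z * fser_term (\<alpha> + 1) (\<beta> + 1) (\<gamma> - 1) (\<delta> + 1) z \<nu>)
           sums (fser \<alpha> \<beta> \<gamma> \<delta> z - 1/z * fser (\<alpha> + 1) (\<beta> + 1) (\<gamma> - 1) (\<delta> + 1) z)"
    by (intro sums_diff sums_mult fser_sums[OF assms] succ_sums)
  hence "(\<lambda>\<nu>. ?E * ?c \<nu>) sums (fser \<alpha> \<beta> \<gamma> \<delta> z - 1/z * fser (\<alpha> + 1) (\<beta> + 1) (\<gamma> - 1) (\<delta> + 1) z)"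
    by (simp only: termwise)
  moreover have "(\<lambda>\<nu>. ?E * ?c \<nu>) sums (?E * MacRobertE [\<alpha> + \<gamma>] [\<beta> + 1] (- z))"
    by (intro sums_mult MacRobertE_uminus_sums plus_one_notin_nonpos_Ints assms)
  ultimately show ?thesis
    using sums_unique2 by blast
qed

lemma fser_succ_alpha_beta2_delta_sums:
  fixes \<alpha> \<beta> \<gamma> \<delta> z :: complex
  assumes "z \<noteq> 0"
    and "\<alpha> + 1 \<notin> \<int>\<^sub>\<le>\<^sub>0" and "\<beta> \<notin> \<int>\<^sub>\<le>\<^sub>0" and "\<delta> \<notin> \<int>\<^sub>\<le>\<^sub>0" and "\<alpha> + \<gamma> \<notin> \<int>\<^sub>\<le>\<^sub>0"
  shows "(\<lambda>\<nu>. of_nat \<nu> * z * fser_term (\<alpha> + 1) (\<beta> + 1) (\<gamma> - 1) (\<delta> + 1) z \<nu>)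
           sums fser (\<alpha> + 1) (\<beta> + 2) \<gamma> (\<delta> + 1) z"
proof -
  have "\<beta> + 1 + 1 \<notin> \<int>\<^sub>\<le>\<^sub>0" and "\<alpha> + 1 + (\<gamma> - 1) + 1 \<notin> \<int>\<^sub>\<le>\<^sub>0"
    using plus_of_nat_notin_nonpos_Ints[OF assms(3), of 2] plus_one_notin_nonpos_Ints[OF assms(5)]
    by (simp_all add: add.assoc)
  from fser_succ_beta_gamma_sums[OF assms(1) plus_one_notin_nonpos_Ints[OF assms(2)] this(1)
                                  plus_one_notin_nonpos_Ints[OF assms(4)] this(2)]
  show ?thesis
    by (simp add: add.assoc)
qed

lemma MacRobertE_product_eq_fser_alpha:
  fixes \<alpha> \<beta> \<gamma> \<delta> z :: complex
  assumes "z \<noteq> 0"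
    and "\<alpha> + 1 \<notin> \<int>\<^sub>\<le>\<^sub>0" and "\<beta> \<notin> \<int>\<^sub>\<le>\<^sub>0" and "\<delta> \<notin> \<int>\<^sub>\<le>\<^sub>0" and "\<alpha> + \<gamma> \<notin> \<int>\<^sub>\<le>\<^sub>0"
  shows "MacRobertE [\<alpha> + 1] [\<delta>] z * MacRobertE [\<alpha> + \<gamma>] [\<beta> + 1] (- z)
           = (\<beta> - \<alpha> - 1) / \<beta> * fser \<alpha> \<beta> \<gamma> \<delta> z + 1/\<beta> * fser (\<alpha> + 1) \<beta> (\<gamma> - 1) \<delta> z
             + 1 / (\<beta> * z ^ 2) * fser (\<alpha> + 1) (\<beta> + 2) \<gamma> (\<delta> + 1) z"
proof -
  let ?E = "MacRobertE [\<alpha> + 1] [\<delta>] z" and ?c = "MacRobert_term (\<alpha> + \<gamma>) (\<beta> + 1) (1/z)"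
  have "\<beta> \<noteq> 0"
    using assms(3) by auto
  have termwise: "(\<beta> - \<alpha> - 1) / \<beta> * fser_term \<alpha> \<beta> \<gamma> \<delta> z \<nu> + 1/\<beta> * fser_term (\<alpha> + 1) \<beta> (\<gamma> - 1) \<delta> z \<nu>
                    + 1 / (\<beta> * z ^ 2) * (of_nat \<nu> * z * fser_term (\<alpha> + 1) (\<beta> + 1) (\<gamma> - 1) (\<delta> + 1) z \<nu>)
                  = ?E * ?c \<nu>" for \<nu>
  proof -
    have B: "\<beta> + of_nat \<nu> \<notin> \<int>\<^sub>\<le>\<^sub>0"
      by (rule plus_of_nat_notin_nonpos_Ints[OF assms(3)])
    show ?thesis
      unfolding fser_term_factored(4) unfolding fser_term_factored(2) unfolding fser_term_factored(1)
      unfolding MacRobertE_contiguous_a[OF assms(2,4) B] MacRobertE_contiguous_b[OF assms(2,4) B, symmetric]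
      using assms(1) \<open>\<beta> \<noteq> 0\<close> by (simp add: field_simps power2_eq_square)
  qed
  have succ_sums: "fser_term (\<alpha> + 1) \<beta> (\<gamma> - 1) \<delta> z sums fser (\<alpha> + 1) \<beta> (\<gamma> - 1) \<delta> z"
    using fser_sums[OF plus_one_notin_nonpos_Ints[OF assms(2)] assms(3,4)] assms(5) by simp
  have "(\<lambda>\<nu>. (\<beta> - \<alpha> - 1) / \<beta> * fser_term \<alpha> \<beta> \<gamma> \<delta> z \<nu> + 1/\<beta> * fser_term (\<alpha> + 1) \<beta> (\<gamma> - 1) \<delta> z \<nu>
              + 1 / (\<beta> * z ^ 2) * (of_nat \<nu> * z * fser_term (\<alpha> + 1) (\<beta> + 1) (\<gamma> - 1) (\<delta> + 1) z \<nu>))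
          sums ((\<beta> - \<alpha> - 1) / \<beta> * fser \<alpha> \<beta> \<gamma> \<delta> z + 1/\<beta> * fser (\<alpha> + 1) \<beta> (\<gamma> - 1) \<delta> z
                + 1 / (\<beta> * z ^ 2) * fser (\<alpha> + 1) (\<beta> + 2) \<gamma> (\<delta> + 1) z)"
    by (intro sums_add sums_mult fser_sums[OF assms(2-5)] succ_sums fser_succ_alpha_beta2_delta_sums[OF assms])
  hence "(\<lambda>\<nu>. ?E * ?c \<nu>) sums ((\<beta> - \<alpha> - 1) / \<beta> * fser \<alpha> \<beta> \<gamma> \<delta> z + 1/\<beta> * fser (\<alpha> + 1) \<beta> (\<gamma> - 1) \<delta> z
                                 + 1 / (\<beta> * z ^ 2) * fser (\<alpha> + 1) (\<beta> + 2) \<gamma> (\<delta> + 1) z)"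
    by (simp only: termwise)
  moreover have "(\<lambda>\<nu>. ?E * ?c \<nu>) sums (?E * MacRobertE [\<alpha> + \<gamma>] [\<beta> + 1] (- z))"
    by (intro sums_mult MacRobertE_uminus_sums plus_one_notin_nonpos_Ints assms)
  ultimately show ?thesis
    using sums_unique2 by blast
qed

lemma MacRobertE_product_eq_fser_delta:
  fixes \<alpha> \<beta> \<gamma> \<delta> z :: complex
  assumes "z \<noteq> 0"
    and "\<alpha> + 1 \<notin> \<int>\<^sub>\<le>\<^sub>0" and "\<beta> \<notin> \<int>\<^sub>\<le>\<^sub>0" and "\<delta> - 1 \<notin> \<int>\<^sub>\<le>\<^sub>0" and "\<alpha> + \<gamma> \<notin> \<int>\<^sub>\<le>\<^sub>0"
  shows "MacRobertE [\<alpha> + 1] [\<delta>] z * MacRobertE [\<alpha> + \<gamma>] [\<beta> + 1] (- z)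
           = (\<beta> - \<delta> + 1) / \<beta> * fser \<alpha> \<beta> \<gamma> \<delta> z + 1/\<beta> * fser \<alpha> \<beta> \<gamma> (\<delta> - 1) z
             + 1 / (\<beta> * z ^ 2) * fser (\<alpha> + 1) (\<beta> + 2) \<gamma> (\<delta> + 1) z"
proof -
  let ?E = "MacRobertE [\<alpha> + 1] [\<delta>] z" and ?c = "MacRobert_term (\<alpha> + \<gamma>) (\<beta> + 1) (1/z)"
  have "\<beta> \<noteq> 0"
    using assms(3) by auto
  have \<delta>: "\<delta> \<notin> \<int>\<^sub>\<le>\<^sub>0"
    using plus_one_notin_nonpos_Ints[OF assms(4)] by simp
  have termwise: "(\<beta> - \<delta> + 1) / \<beta> * fser_term \<alpha> \<beta> \<gamma> \<delta> z \<nu> + 1/\<beta> * fser_term \<alpha> \<beta> \<gamma> (\<delta> - 1) z \<nu>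
                    + 1 / (\<beta> * z ^ 2) * (of_nat \<nu> * z * fser_term (\<alpha> + 1) (\<beta> + 1) (\<gamma> - 1) (\<delta> + 1) z \<nu>)
                  = ?E * ?c \<nu>" for \<nu>
  proof -
    have B: "\<beta> + of_nat \<nu> \<notin> \<int>\<^sub>\<le>\<^sub>0"
      by (rule plus_of_nat_notin_nonpos_Ints[OF assms(3)])
    show ?thesis
      unfolding fser_term_factored(4) unfolding fser_term_factored(3) unfolding fser_term_factored(1)
      unfolding MacRobertE_contiguous_d[OF assms(2,4) B] MacRobertE_contiguous_b[OF assms(2) \<delta> B, symmetric]
      using assms(1) \<open>\<beta> \<noteq> 0\<close> by (simp add: field_simps power2_eq_square)
  qed
  have "(\<lambda>\<nu>. (\<beta> - \<delta> + 1) / \<beta> * fser_term \<alpha> \<beta> \<gamma> \<delta> z \<nu> + 1/\<beta> * fser_term \<alpha> \<beta> \<gamma> (\<delta> - 1) z \<nu>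
              + 1 / (\<beta> * z ^ 2) * (of_nat \<nu> * z * fser_term (\<alpha> + 1) (\<beta> + 1) (\<gamma> - 1) (\<delta> + 1) z \<nu>))
          sums ((\<beta> - \<delta> + 1) / \<beta> * fser \<alpha> \<beta> \<gamma> \<delta> z + 1/\<beta> * fser \<alpha> \<beta> \<gamma> (\<delta> - 1) z
                + 1 / (\<beta> * z ^ 2) * fser (\<alpha> + 1) (\<beta> + 2) \<gamma> (\<delta> + 1) z)"
    by (intro sums_add sums_mult fser_sums[OF assms(2,3) \<delta> assms(5)] fser_sums[OF assms(2-5)]
          fser_succ_alpha_beta2_delta_sums[OF assms(1-3) \<delta> assms(5)])
  hence "(\<lambda>\<nu>. ?E * ?c \<nu>) sums ((\<beta> - \<delta> + 1) / \<beta> * fser \<alpha> \<beta> \<gamma> \<delta> z + 1/\<beta> * fser \<alpha> \<beta> \<gamma> (\<delta> - 1) z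
                                 + 1 / (\<beta> * z ^ 2) * fser (\<alpha> + 1) (\<beta> + 2) \<gamma> (\<delta> + 1) z)"
    by (simp only: termwise)
  moreover have "(\<lambda>\<nu>. ?E * ?c \<nu>) sums (?E * MacRobertE [\<alpha> + \<gamma>] [\<beta> + 1] (- z))"
    by (intro sums_mult MacRobertE_uminus_sums plus_one_notin_nonpos_Ints assms)
  ultimately show ?thesis
    using sums_unique2 by blast
qed

theorem mainTheorem5:
  fixes \<alpha> \<beta> \<gamma> \<delta> z :: complex
  assumes z: "z \<noteq> 0"
    and a: "\<alpha> + 1 \<notin> \<int>\<^sub>\<le>\<^sub>0"
    and b: "\<beta> \<notin> \<int>\<^sub>\<le>\<^sub>0"
    and d: "\<delta> - 1 \<notin> \<int>\<^sub>\<le>\<^sub>0"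
    and ag: "\<alpha> + \<gamma> \<notin> \<int>\<^sub>\<le>\<^sub>0"
  shows "(MacRobertE [\<alpha> + 1] [\<delta>] z * MacRobertE [\<alpha> + \<gamma>] [\<beta> + 1] (- z)
           = fser \<alpha> \<beta> \<gamma> \<delta> z - (1 / z) * fser (\<alpha> + 1) (\<beta> + 1) (\<gamma> - 1) (\<delta> + 1) z) \<and>
         (MacRobertE [\<alpha> + 1] [\<delta>] z * MacRobertE [\<alpha> + \<gamma>] [\<beta> + 1] (- z)
           = (\<beta> - \<alpha> - 1) / \<beta> * fser \<alpha> \<beta> \<gamma> \<delta> z
             + (1 / \<beta>) * fser (\<alpha> + 1) \<beta> (\<gamma> - 1) \<delta> z
             + 1 / (\<beta> * z ^ 2) * fser (\<alpha> + 1) (\<beta> + 2) \<gamma> (\<delta> + 1) z) \<and>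
         (MacRobertE [\<alpha> + 1] [\<delta>] z * MacRobertE [\<alpha> + \<gamma>] [\<beta> + 1] (- z)
           = (\<beta> - \<delta> + 1) / \<beta> * fser \<alpha> \<beta> \<gamma> \<delta> z
             + (1 / \<beta>) * fser \<alpha> \<beta> \<gamma> (\<delta> - 1) z
             + 1 / (\<beta> * z ^ 2) * fser (\<alpha> + 1) (\<beta> + 2) \<gamma> (\<delta> + 1) z)"
proof -
  have "\<delta> \<notin> \<int>\<^sub>\<le>\<^sub>0"
    using plus_one_notin_nonpos_Ints[OF d] by simp
  thus ?thesis
    using MacRobertE_product_eq_fser_diff[OF a b _ ag] MacRobertE_product_eq_fser_alpha[OF z a b _ ag]
          MacRobertE_product_eq_fser_delta[OF z a b d ag]
    by simp
qed

end
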